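(* Let $V_0=\mathbb{C}[x_1,x_2,\dots]$ with each $x_i$ primitive, let $A$ be a commutative $\mathbb{C}$-algebra, and let $s_1,s_2$ be symmetric $A$-valued bicharacters on $V_0$. Suppose $r$ is an $A$-valued bicharacter on $V_0$ such that \[ \mathrm{EQ}_r(a\bullet_{s_1}b)=\mathrm{EQ}_r(a)\bullet_{s_2}\mathrm{EQ}_r(b)\quad\text{for all }a,b\in V_0. \] Then the map $\mathrm{EQ}_r$ depends only on the symmetrization $s=r\circ r^t=s_2\circ s_1^{-1}$; consequently the intertwining map $\mathrm{EQ}_r$ is unique among the maps $\mathrm{EQ}_{r}$ for the various bicharacters $r$ (any two bicharacters $r,\tilde r$ with this intertwining property satisfy $\mathrm{EQ}_r=\mathrm{EQ}_{\tilde r}$).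
   Context: Hopf structure on $V_0$: $\Delta(x_i)=x_i\otimes1+1\otimes x_i$, $\eta(x_i)=0$, $S(x_i)=-x_i$. Sweedler notation: $\Delta(a)=\sum a'\otimes a''$, $\Delta^2(a)=\sum a'\otimes a''\otimes a'''$. An $A$-valued bicharacter is a linear map $r:V_0\otimes V_0\to A$ with $r(1\otimes a)=\eta(a)=r(a\otimes1)$, $r(ab\otimes c)=\sum r(a\otimes c')r(b\otimes c'')$, $r(a\otimes bc)=\sum r(a'\otimes b)r(a''\otimes c)$. Convolution $(r\circ t)(a\otimes b)=\sum r(a'\otimes b')t(a''\otimes b'')$; $r^t(a\otimes b)=r(b\otimes a)$; inverse $t^{-1}(a\otimes b)=t(S(a)\otimes b)$; $t$ symmetric if $t=t^t$. For symmetric $t$, $\bullet_t$ is the $A$-bilinear product on $V_0\otimes A$ extending $a\bullet_t b=\sum a'b'\,t(a''\otimes b'')$. $\mathrm{EQ}_r(m)=\sum r(m'\otimes m'')m'''$, extended $A$-linearly. *)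

theory Defs
  imports Complex_Main "HOL-Library.Poly_Mapping"
begin

text \<open>V_0 = C[x_1,x_2,...] is represented via its monomial basis: a monomial
  x^alpha is a finitely supported exponent vector alpha :: nat =>0 nat.
  Elements of V_0 are finitely supported coefficient maps mono =>0 complex,
  elements of V_0 (x) A are mono =>0 'a.  An A-valued (C-linear) map on
  V_0 (x) V_0 is given by its values on the basis x^alpha (x) x^beta.\<close>

type_synonym mono = "nat \<Rightarrow>\<^sub>0 nat"

text \<open>A commutative C-algebra: a commutative ring 'a with a ring homomorphism
  iota from complex (the structure map).\<close>
definition C_alg :: "(complex \<Rightarrow> 'a::comm_ring_1) \<Rightarrow> bool" where
  "C_alg \<iota> \<longleftrightarrow> \<iota> 1 = 1 \<and> (\<forall>x y. \<iota> (x + y) = \<iota> x + \<iota> y) \<and> (\<forall>x y. \<iota> (x * y) = \<iota> x * \<iota> y)"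

definition subs :: "mono \<Rightarrow> mono set" where
  "subs \<alpha> = {\<beta>. \<forall>i. Poly_Mapping.lookup \<beta> i \<le> Poly_Mapping.lookup \<alpha> i}"

text \<open>Multi-binomial coefficient: Delta(x^alpha) = sum_{beta in subs alpha} mbinom alpha beta x^beta (x) x^(alpha-beta),
  since each x_i is primitive.\<close>
definition mbinom :: "mono \<Rightarrow> mono \<Rightarrow> nat" where
  "mbinom \<alpha> \<beta> = (\<Prod>i\<in>Poly_Mapping.keys \<alpha>. Poly_Mapping.lookup \<alpha> i choose Poly_Mapping.lookup \<beta> i)"

definition mdeg :: "mono \<Rightarrow> nat" where
  "mdeg \<alpha> = (\<Sum>i\<in>Poly_Mapping.keys \<alpha>. Poly_Mapping.lookup \<alpha> i)"

definition bichar :: "(mono \<Rightarrow> mono \<Rightarrow> 'a::comm_ring_1) \<Rightarrow> bool" where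
  "bichar r \<longleftrightarrow>
     (\<forall>\<beta>. r 0 \<beta> = (if \<beta> = 0 then 1 else 0)) \<and>
     (\<forall>\<alpha>. r \<alpha> 0 = (if \<alpha> = 0 then 1 else 0)) \<and>
     (\<forall>\<alpha> \<beta> \<gamma>. r (\<alpha> + \<beta>) \<gamma> =
        (\<Sum>\<delta>\<in>subs \<gamma>. of_nat (mbinom \<gamma> \<delta>) * r \<alpha> \<delta> * r \<beta> (\<gamma> - \<delta>))) \<and>
     (\<forall>\<alpha> \<beta> \<gamma>. r \<alpha> (\<beta> + \<gamma>) =
        (\<Sum>\<delta>\<in>subs \<alpha>. of_nat (mbinom \<alpha> \<delta>) * r \<delta> \<beta> * r (\<alpha> - \<delta>) \<gamma>))"

text \<open>Convolution (r o t)(a (x) b) = sum r(a' (x) b') t(a'' (x) b'').\<close>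
definition conv :: "(mono \<Rightarrow> mono \<Rightarrow> 'a::comm_ring_1) \<Rightarrow> (mono \<Rightarrow> mono \<Rightarrow> 'a) \<Rightarrow> mono \<Rightarrow> mono \<Rightarrow> 'a" where
  "conv r t \<alpha> \<beta> = (\<Sum>\<gamma>\<in>subs \<alpha>. \<Sum>\<delta>\<in>subs \<beta>.
      of_nat (mbinom \<alpha> \<gamma> * mbinom \<beta> \<delta>) * r \<gamma> \<delta> * t (\<alpha> - \<gamma>) (\<beta> - \<delta>))"

definition transp :: "(mono \<Rightarrow> mono \<Rightarrow> 'a) \<Rightarrow> mono \<Rightarrow> mono \<Rightarrow> 'a" where
  "transp r \<alpha> \<beta> = r \<beta> \<alpha>"

text \<open>t^{-1}(a (x) b) = t(S(a) (x) b), with S(x^alpha) = (-1)^|alpha| x^alpha.\<close>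
definition binv :: "(mono \<Rightarrow> mono \<Rightarrow> 'a::comm_ring_1) \<Rightarrow> mono \<Rightarrow> mono \<Rightarrow> 'a" where
  "binv t \<alpha> \<beta> = (-1) ^ mdeg \<alpha> * t \<alpha> \<beta>"

definition symm :: "(mono \<Rightarrow> mono \<Rightarrow> 'a) \<Rightarrow> bool" where
  "symm t \<longleftrightarrow> t = transp t"

text \<open>The A-bilinear product bullet_t on V_0 (x) A:
  x^alpha bullet_t x^beta = sum a' b' t(a'' (x) b'').\<close>
definition bprod :: "(mono \<Rightarrow> mono \<Rightarrow> 'a::comm_ring_1) \<Rightarrow> (mono \<Rightarrow>\<^sub>0 'a) \<Rightarrow> (mono \<Rightarrow>\<^sub>0 'a) \<Rightarrow> (mono \<Rightarrow>\<^sub>0 'a)" where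
  "bprod t p q = (\<Sum>\<alpha>\<in>Poly_Mapping.keys p. \<Sum>\<beta>\<in>Poly_Mapping.keys q. \<Sum>\<gamma>\<in>subs \<alpha>. \<Sum>\<delta>\<in>subs \<beta>.
      Poly_Mapping.single (\<gamma> + \<delta>)
        (Poly_Mapping.lookup p \<alpha> * Poly_Mapping.lookup q \<beta> * of_nat (mbinom \<alpha> \<gamma> * mbinom \<beta> \<delta>) * t (\<alpha> - \<gamma>) (\<beta> - \<delta>)))"

text \<open>EQ_r(m) = sum r(m' (x) m'') m''', extended A-linearly;
  Delta^2(x^alpha) = sum mbinom alpha beta * mbinom (alpha-beta) gamma x^beta (x) x^gamma (x) x^(alpha-beta-gamma).\<close>
definition EQ :: "(mono \<Rightarrow> mono \<Rightarrow> 'a::comm_ring_1) \<Rightarrow> (mono \<Rightarrow>\<^sub>0 'a) \<Rightarrow> (mono \<Rightarrow>\<^sub>0 'a)" where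
  "EQ r p = (\<Sum>\<alpha>\<in>Poly_Mapping.keys p. \<Sum>\<beta>\<in>subs \<alpha>. \<Sum>\<gamma>\<in>subs (\<alpha> - \<beta>).
      Poly_Mapping.single (\<alpha> - \<beta> - \<gamma>)
        (Poly_Mapping.lookup p \<alpha> * of_nat (mbinom \<alpha> \<beta> * mbinom (\<alpha> - \<beta>) \<gamma>) * r \<beta> \<gamma>))"

text \<open>Embedding V_0 into V_0 (x) A, a |-> a (x) 1.\<close>
definition emb :: "(complex \<Rightarrow> 'a::comm_ring_1) \<Rightarrow> (mono \<Rightarrow>\<^sub>0 complex) \<Rightarrow> (mono \<Rightarrow>\<^sub>0 'a)" where
  "emb \<iota> a = Poly_Mapping.map \<iota> a"

definition intertw :: "(complex \<Rightarrow> 'a::comm_ring_1) \<Rightarrow> (mono \<Rightarrow> mono \<Rightarrow> 'a) \<Rightarrow> (mono \<Rightarrow> mono \<Rightarrow> 'a) \<Rightarrow> (mono \<Rightarrow> mono \<Rightarrow> 'a) \<Rightarrow> bool" where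
  "intertw \<iota> r s1 s2 \<longleftrightarrow> (\<forall>a b. EQ r (bprod s1 (emb \<iota> a) (emb \<iota> b)) =
        bprod s2 (EQ r (emb \<iota> a)) (EQ r (emb \<iota> b)))"

end

theory Submission
  imports Defs
begin

text \<open>Since the \<open>x\<^sub>i\<close> are primitive, a bicharacter \<open>r\<close> is determined by the matrix
  \<open>c\<^sub>i\<^sub>j = r(x\<^sub>i \<otimes> x\<^sub>j)\<close> through a recursion in its first argument. This recursion is
  additive under convolution and changes sign under inversion, so \<open>r \<circ> r\<^sup>t\<close> is determined
  by \<open>c\<^sub>i\<^sub>j + c\<^sub>j\<^sub>i\<close> and \<open>s\<^sub>2 \<circ> s\<^sub>1\<^sup>-\<^sup>1\<close> by the generator values of
  \<open>s\<^sub>2 - s\<^sub>1\<close>. The constant term of the intertwining identity for \<open>a = x\<^sub>i\<close>,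
  \<open>b = x\<^sub>j\<close> reads \<open>s\<^sub>1(x\<^sub>i \<otimes> x\<^sub>j) + c\<^sub>i\<^sub>j + c\<^sub>j\<^sub>i = s\<^sub>2(x\<^sub>i \<otimes> x\<^sub>j)\<close>,
  whence \<open>r \<circ> r\<^sup>t = s\<^sub>2 \<circ> s\<^sub>1\<^sup>-\<^sup>1\<close>. Finally \<open>EQ\<^sub>r(m) = D\<^sub>r(m') m''\<close> with
  \<open>D\<^sub>r(m) = r(m' \<otimes> m'')\<close>, and \<open>D\<^sub>r\<close> obeys a recursion involving only
  \<open>c\<^sub>i\<^sub>j + c\<^sub>j\<^sub>i\<close>, so \<open>EQ\<^sub>r\<close> depends only on \<open>r \<circ> r\<^sup>t\<close>.\<close>

section \<open>Monomials\<close>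

abbreviation lookup :: "('b \<Rightarrow>\<^sub>0 'c::zero) \<Rightarrow> 'b \<Rightarrow> 'c" where
  "lookup \<equiv> Poly_Mapping.lookup"

abbreviation keys :: "('b \<Rightarrow>\<^sub>0 'c::zero) \<Rightarrow> 'b set" where
  "keys \<equiv> Poly_Mapping.keys"

definition var :: "nat \<Rightarrow> mono" where
  "var i = Poly_Mapping.single i 1"

declare lookup_add [simp] lookup_minus [simp]

lemma lookup_var [simp]: "lookup (var i) k = (if k = i then 1 else 0)"
  by (simp add: var_def lookup_single when_def)

lemma var_neq_zero [simp]: "var i \<noteq> 0" "0 \<noteq> var i"
  by (metis lookup_var lookup_zero one_neq_zero)+

lemma var_eq_var_iff [simp]: "var i = var j \<longleftrightarrow> i = j"
  by (metis lookup_var one_neq_zero)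

lemma var_add_var_neq_zero: "var i + var j \<noteq> 0"
  by (metis lookup_add lookup_var lookup_zero add_is_0 one_neq_zero)

lemma keys_var [simp]: "keys (var i) = {i}"
  by (simp add: var_def)

lemma in_keys_iff_pos: "k \<in> keys (\<alpha>::mono) \<longleftrightarrow> 0 < lookup \<alpha> k"
  by (simp add: in_keys_iff)

lemma keys_diff_subset: "keys ((\<alpha>::mono) - \<beta>) \<subseteq> keys \<alpha>"
  by (auto simp: in_keys_iff_pos)

lemma keys_add_mono: "keys ((\<alpha>::mono) + \<beta>) = keys \<alpha> \<union> keys \<beta>"
  by (auto simp: in_keys_iff_pos)

lemma diff_var_add_var: "0 < lookup \<alpha> i \<Longrightarrow> (\<alpha> - var i) + var i = \<alpha>"
  by (rule poly_mapping_eqI) auto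

lemma add_var_diff_var [simp]: "(\<alpha> + var i) - var i = \<alpha>"
  by (rule poly_mapping_eqI) auto

lemma diff_diff_var_commute: "(\<gamma>::mono) - \<delta> - var j = (\<gamma> - var j) - \<delta>"
  by (rule poly_mapping_eqI) auto

lemma diff_add_var: "(\<gamma>::mono) - (\<delta> + var j) = (\<gamma> - var j) - \<delta>"
  by (rule poly_mapping_eqI) auto

lemma mono_neq_zero_obtains_var:
  assumes "(\<alpha>::mono) \<noteq> 0"
  obtains j where "\<alpha> = (\<alpha> - var j) + var j" "j \<in> keys \<alpha>"
proof -
  obtain j where "j \<in> keys \<alpha>" using assms by (metis keys_eq_empty ex_in_conv)
  then show ?thesis using that diff_var_add_var in_keys_iff_pos by metis
qed

lemma mdeg_eq_sum: "finite S \<Longrightarrow> keys \<alpha> \<subseteq> S \<Longrightarrow> mdeg \<alpha> = (\<Sum>k\<in>S. lookup \<alpha> k)"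
  unfolding mdeg_def by (rule sum.mono_neutral_left) (auto simp: in_keys_iff)

lemma mdeg_add: "mdeg (\<alpha> + \<beta>) = mdeg \<alpha> + mdeg \<beta>"
proof -
  let ?S = "keys \<alpha> \<union> keys \<beta>"
  have "mdeg (\<alpha> + \<beta>) = (\<Sum>k\<in>?S. lookup (\<alpha> + \<beta>) k)"
    by (rule mdeg_eq_sum) (auto simp: keys_add_mono)
  also have "\<dots> = (\<Sum>k\<in>?S. lookup \<alpha> k) + (\<Sum>k\<in>?S. lookup \<beta> k)"
    by (simp add: sum.distrib)
  also have "\<dots> = mdeg \<alpha> + mdeg \<beta>"
    using mdeg_eq_sum[of ?S \<alpha>] mdeg_eq_sum[of ?S \<beta>] by simp
  finally show ?thesis .
qed

lemma mdeg_0 [simp]: "mdeg 0 = 0"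
  by (simp add: mdeg_def)

lemma mdeg_var [simp]: "mdeg (var i) = 1"
  by (simp add: mdeg_def)

lemma mdeg_diff_var_less: "0 < lookup \<alpha> j \<Longrightarrow> mdeg (\<alpha> - var j) < mdeg \<alpha>"
  using mdeg_add[of "\<alpha> - var j" "var j"] diff_var_add_var[of \<alpha> j] by simp

lemma mono_induct [case_names zero add_var]:
  assumes "P 0" and "\<And>\<alpha> i. P \<alpha> \<Longrightarrow> P (\<alpha> + var i)"
  shows "P \<alpha>"
proof (induction "mdeg \<alpha>" arbitrary: \<alpha>)
  case 0
  then have "\<alpha> = 0" unfolding mdeg_def
    by (metis (no_types, lifting) finite_keys in_keys_iff poly_mapping_eqI lookup_zero sum_eq_0_iff)
  then show ?case using assms by simp
next
  case (Suc n)
  then obtain i where i: "\<alpha> = (\<alpha> - var i) + var i"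
    by (metis mono_neq_zero_obtains_var mdeg_def sum.empty keys_zero nat.distinct(1))
  then have "mdeg (\<alpha> - var i) = n" using Suc(2) mdeg_add[of "\<alpha> - var i" "var i"] by simp
  then show ?case using Suc assms(2) i by metis
qed

lemma subs_iff: "\<beta> \<in> subs \<alpha> \<longleftrightarrow> (\<forall>i. lookup \<beta> i \<le> lookup \<alpha> i)"
  by (simp add: subs_def)

lemma keys_subs: "\<beta> \<in> subs \<alpha> \<Longrightarrow> keys \<beta> \<subseteq> keys \<alpha>"
  by (auto simp: subs_iff in_keys_iff_pos) (metis less_le_trans)

lemma subs_0 [simp]: "subs 0 = {0}"
  by (auto simp: subs_iff intro: poly_mapping_eqI)

lemma zero_in_subs [simp]: "0 \<in> subs \<alpha>" and self_in_subs [simp]: "\<alpha> \<in> subs \<alpha>"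
  by (auto simp: subs_iff)

lemma add_var_diff_subs: "\<beta> \<in> subs \<alpha> \<Longrightarrow> \<alpha> + var i - \<beta> = (\<alpha> - \<beta>) + var i"
  by (rule poly_mapping_eqI) (auto simp: subs_iff)

lemma subs_add_var: "subs (\<alpha> + var i) = subs \<alpha> \<union> (\<lambda>\<beta>. \<beta> + var i) ` subs \<alpha>"
proof (intro equalityI subsetI)
  fix \<beta> assume b: "\<beta> \<in> subs (\<alpha> + var i)"
  then have le: "lookup \<beta> k \<le> lookup \<alpha> k + (if k = i then 1 else 0)" for k
    by (simp add: subs_iff)
  show "\<beta> \<in> subs \<alpha> \<union> (\<lambda>\<beta>. \<beta> + var i) ` subs \<alpha>"
  proof (cases "\<beta> \<in> subs \<alpha>")
    case False
    then obtain k where k: "lookup \<beta> k > lookup \<alpha> k" using subs_iff not_le by blast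
    with le[of k] have "k = i" "lookup \<beta> i = lookup \<alpha> i + 1" by (auto split: if_splits)
    then have "\<beta> = (\<beta> - var i) + var i" by (intro diff_var_add_var[symmetric]) simp
    moreover have "lookup \<beta> k - (if k = i then 1 else 0) \<le> lookup \<alpha> k" for k
      using le[of k] by (cases "k = i") auto
    then have "\<beta> - var i \<in> subs \<alpha>" by (simp add: subs_iff)
    ultimately show ?thesis by blast
  qed simp
next
  fix \<beta> assume "\<beta> \<in> subs \<alpha> \<union> (\<lambda>\<beta>. \<beta> + var i) ` subs \<alpha>"
  then show "\<beta> \<in> subs (\<alpha> + var i)" by (auto simp: subs_iff le_SucI)
qed

lemma finite_subs [simp]: "finite (subs \<alpha>)"
  by (induction \<alpha> rule: mono_induct) (auto simp: subs_add_var)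

lemma subs_var: "subs (var i) = {0, var i}"
  using subs_add_var[of 0 i] by (simp add: insert_commute)

lemma var_in_subs_iff: "var j \<in> subs \<gamma> \<longleftrightarrow> j \<in> keys \<gamma>"
  by (auto simp: subs_iff in_keys_iff_pos)

section \<open>Multi-binomial coefficients\<close>

lemma mbinom_eq_prod:
  "finite S \<Longrightarrow> keys \<alpha> \<subseteq> S \<Longrightarrow> \<beta> \<in> subs \<alpha> \<Longrightarrow>
    mbinom \<alpha> \<beta> = (\<Prod>k\<in>S. lookup \<alpha> k choose lookup \<beta> k)"
  unfolding mbinom_def by (rule prod.mono_neutral_left) (auto simp: in_keys_iff subs_iff, metis le_zero_eq binomial_n_0 One_nat_def)

lemma mbinom_0 [simp]: "mbinom \<alpha> 0 = 1" and mbinom_self [simp]: "mbinom \<alpha> \<alpha> = 1"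
  by (simp_all add: mbinom_def)

lemma mbinom_var: "j \<in> keys \<gamma> \<Longrightarrow> mbinom \<gamma> (var j) = lookup \<gamma> j"
  unfolding mbinom_def by (simp add: prod.remove[of _ j])

lemma mbinom_mult_mbinom:
  assumes b: "\<beta> \<in> subs \<alpha>" and g: "\<gamma> \<in> subs (\<alpha> - \<beta>)"
  shows "mbinom \<alpha> \<beta> * mbinom (\<alpha> - \<beta>) \<gamma> = mbinom \<alpha> (\<beta> + \<gamma>) * mbinom (\<beta> + \<gamma>) \<beta>"
proof -
  let ?S = "keys \<alpha>"
  have bg: "\<beta> + \<gamma> \<in> subs \<alpha>" using b g by (auto simp: subs_iff) (metis le_diff_conv2 add.commute)
  have "mbinom \<alpha> \<beta> * mbinom (\<alpha> - \<beta>) \<gamma>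
      = (\<Prod>k\<in>?S. (lookup \<alpha> k choose lookup \<beta> k) * (lookup (\<alpha> - \<beta>) k choose lookup \<gamma> k))"
    using mbinom_eq_prod[of ?S \<alpha> \<beta>] mbinom_eq_prod[of ?S "\<alpha> - \<beta>" \<gamma>] b g keys_diff_subset
    by (simp add: prod.distrib)
  also have "\<dots> = (\<Prod>k\<in>?S. (lookup \<alpha> k choose lookup (\<beta> + \<gamma>) k) * (lookup (\<beta> + \<gamma>) k choose lookup \<beta> k))"
  proof (rule prod.cong)
    fix k
    have "lookup \<beta> k + lookup \<gamma> k \<le> lookup \<alpha> k" using bg by (simp add: subs_iff)
    then show "(lookup \<alpha> k choose lookup \<beta> k) * (lookup (\<alpha> - \<beta>) k choose lookup \<gamma> k)
      = (lookup \<alpha> k choose lookup (\<beta> + \<gamma>) k) * (lookup (\<beta> + \<gamma>) k choose lookup \<beta> k)"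
      using choose_mult[of "lookup \<beta> k" "lookup \<beta> k + lookup \<gamma> k" "lookup \<alpha> k"] by simp
  qed simp
  also have "\<dots> = mbinom \<alpha> (\<beta> + \<gamma>) * mbinom (\<beta> + \<gamma>) \<beta>"
    using mbinom_eq_prod[of ?S \<alpha> "\<beta> + \<gamma>"] mbinom_eq_prod[of ?S "\<beta> + \<gamma>" \<beta>] bg keys_subs[OF bg]
    by (simp add: prod.distrib subs_iff)
  finally show ?thesis .
qed

text \<open>\<open>mbinom\<close> extended by zero outside \<open>subs \<nu>\<close>, so that Pascal's rule and
  absorption hold without side conditions.\<close>
definition mchoose :: "mono \<Rightarrow> mono \<Rightarrow> nat" where
  "mchoose \<nu> \<beta> = (\<Prod>k\<in>keys \<nu> \<union> keys \<beta>. lookup \<nu> k choose lookup \<beta> k)"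

lemma mchoose_eq_prod:
  "finite S \<Longrightarrow> keys \<nu> \<union> keys \<beta> \<subseteq> S \<Longrightarrow> mchoose \<nu> \<beta> = (\<Prod>k\<in>S. lookup \<nu> k choose lookup \<beta> k)"
  unfolding mchoose_def by (rule prod.mono_neutral_left) (auto simp: in_keys_iff)

lemma mchoose_eq_mbinom: "\<beta> \<in> subs \<nu> \<Longrightarrow> mchoose \<nu> \<beta> = mbinom \<nu> \<beta>"
  using mbinom_eq_prod[of "keys \<nu>" \<nu> \<beta>] mchoose_eq_prod[of "keys \<nu>" \<nu> \<beta>] keys_subs by auto

lemma mchoose_eq_0: "\<beta> \<notin> subs \<nu> \<Longrightarrow> mchoose \<nu> \<beta> = 0"
proof -
  assume "\<beta> \<notin> subs \<nu>"
  then obtain k where k: "lookup \<beta> k > lookup \<nu> k" using subs_iff not_le by blast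
  then have "k \<in> keys \<beta>" by (simp add: in_keys_iff_pos)
  then show ?thesis unfolding mchoose_def using k by (intro prod_zero) auto
qed

lemma sum_mbinom_eq_sum_mchoose:
  "finite T \<Longrightarrow> subs \<nu> \<subseteq> T \<Longrightarrow>
    (\<Sum>\<beta>\<in>subs \<nu>. of_nat (mbinom \<nu> \<beta>) * f \<beta>) = (\<Sum>\<beta>\<in>T. of_nat (mchoose \<nu> \<beta>) * f \<beta>)"
  by (rule sum.mono_neutral_cong_left) (auto simp: mchoose_eq_0 mchoose_eq_mbinom)

lemma mchoose_add_var:
  "mchoose (\<nu> + var i) \<beta> = mchoose \<nu> \<beta> + (if 0 < lookup \<beta> i then mchoose \<nu> (\<beta> - var i) else 0)"
proof -
  let ?S = "insert i (keys \<nu> \<union> keys \<beta>)"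
  let ?R = "\<Prod>k\<in>?S - {i}. lookup \<nu> k choose lookup \<beta> k"
  have f: "finite ?S" by simp
  have "mchoose (\<nu> + var i) \<beta> = (\<Prod>k\<in>?S. lookup (\<nu> + var i) k choose lookup \<beta> k)"
    by (rule mchoose_eq_prod) (auto simp: keys_add_mono)
  also have "\<dots> = (lookup \<nu> i + 1 choose lookup \<beta> i) * ?R"
    by (subst prod.remove[OF f]) (auto intro!: prod.cong)
  finally have X1: "mchoose (\<nu> + var i) \<beta> = (lookup \<nu> i + 1 choose lookup \<beta> i) * ?R" .
  have "mchoose \<nu> \<beta> = (\<Prod>k\<in>?S. lookup \<nu> k choose lookup \<beta> k)"
    by (rule mchoose_eq_prod) auto
  also have "\<dots> = (lookup \<nu> i choose lookup \<beta> i) * ?R"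
    by (rule prod.remove[OF f]) simp
  finally have X2: "mchoose \<nu> \<beta> = (lookup \<nu> i choose lookup \<beta> i) * ?R" .
  have "mchoose \<nu> (\<beta> - var i) = (\<Prod>k\<in>?S. lookup \<nu> k choose lookup (\<beta> - var i) k)"
    by (rule mchoose_eq_prod) (use keys_diff_subset[of \<beta> "var i"] in auto)
  also have "\<dots> = (lookup \<nu> i choose (lookup \<beta> i - 1)) * ?R"
    by (subst prod.remove[OF f]) (auto intro!: prod.cong)
  finally have X3: "mchoose \<nu> (\<beta> - var i) = (lookup \<nu> i choose (lookup \<beta> i - 1)) * ?R" .
  show ?thesis unfolding X1 X2 X3 by (cases "lookup \<beta> i") (auto simp: algebra_simps)
qed

lemma mchoose_absorb:
  assumes "0 < lookup \<beta> j"
  shows "mchoose \<nu> \<beta> * lookup \<beta> j = lookup \<nu> j * mchoose (\<nu> - var j) (\<beta> - var j)"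
proof -
  let ?S = "keys \<nu> \<union> keys \<beta>"
  let ?R = "\<Prod>k\<in>?S - {j}. lookup \<nu> k choose lookup \<beta> k"
  have f: "finite ?S" and jS: "j \<in> ?S" using assms by (auto simp: in_keys_iff_pos)
  have X1: "mchoose \<nu> \<beta> = (lookup \<nu> j choose lookup \<beta> j) * ?R"
    by (simp add: mchoose_def prod.remove[OF f jS])
  have "mchoose (\<nu> - var j) (\<beta> - var j)
      = (\<Prod>k\<in>?S. lookup (\<nu> - var j) k choose lookup (\<beta> - var j) k)"
    by (rule mchoose_eq_prod)
      (use keys_diff_subset[of \<beta> "var j"] keys_diff_subset[of \<nu> "var j"] in auto)
  also have "\<dots> = ((lookup \<nu> j - 1) choose (lookup \<beta> j - 1)) * ?R"
    by (subst prod.remove[OF f jS]) (auto intro!: prod.cong)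
  finally have X2: "mchoose (\<nu> - var j) (\<beta> - var j) = ((lookup \<nu> j - 1) choose (lookup \<beta> j - 1)) * ?R" .
  have "(lookup \<nu> j choose lookup \<beta> j) * lookup \<beta> j
      = lookup \<nu> j * ((lookup \<nu> j - 1) choose (lookup \<beta> j - 1))"
  proof (cases "lookup \<nu> j")
    case (Suc n)
    obtain m where "lookup \<beta> j = Suc m" using assms by (metis gr0_implies_Suc)
    then show ?thesis using Suc_times_binomial_eq[of n m] Suc by (simp add: mult.commute)
  qed (use assms in simp)
  then show ?thesis unfolding X1 X2 by (simp add: algebra_simps)
qed

lemma mchoose_absorb_complement:
  assumes "0 < lookup \<nu> j"
  shows "mchoose \<nu> \<beta> * (lookup \<nu> j - lookup \<beta> j) = lookup \<nu> j * mchoose (\<nu> - var j) \<beta>"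
proof -
  let ?S = "keys \<nu> \<union> keys \<beta>"
  let ?R = "\<Prod>k\<in>?S - {j}. lookup \<nu> k choose lookup \<beta> k"
  have f: "finite ?S" and jS: "j \<in> ?S" using assms by (auto simp: in_keys_iff_pos)
  have X1: "mchoose \<nu> \<beta> = (lookup \<nu> j choose lookup \<beta> j) * ?R"
    by (simp add: mchoose_def prod.remove[OF f jS])
  have "mchoose (\<nu> - var j) \<beta> = (\<Prod>k\<in>?S. lookup (\<nu> - var j) k choose lookup \<beta> k)"
    by (rule mchoose_eq_prod) (use keys_diff_subset[of \<nu> "var j"] in auto)
  also have "\<dots> = ((lookup \<nu> j - 1) choose lookup \<beta> j) * ?R"
    by (subst prod.remove[OF f jS]) (auto intro!: prod.cong)
  finally have X2: "mchoose (\<nu> - var j) \<beta> = ((lookup \<nu> j - 1) choose lookup \<beta> j) * ?R" .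
  have "mchoose \<nu> \<beta> * (lookup \<nu> j - lookup \<beta> j)
      = ((lookup \<nu> j choose lookup \<beta> j) * (lookup \<nu> j - lookup \<beta> j)) * ?R"
    unfolding X1 by (simp only: ac_simps)
  also have "\<dots> = lookup \<nu> j * (((lookup \<nu> j - 1) choose lookup \<beta> j) * ?R)"
    using binomial_absorb_comp[of "lookup \<nu> j" "lookup \<beta> j"] by (simp only: ac_simps)
  finally show ?thesis unfolding X2 .
qed

lemma sum_mbinom_add_var:
  fixes f :: "mono \<Rightarrow> 'a::comm_semiring_1"
  shows "(\<Sum>\<beta>\<in>subs (\<nu> + var i). of_nat (mbinom (\<nu> + var i) \<beta>) * f \<beta>)
       = (\<Sum>\<beta>\<in>subs \<nu>. of_nat (mbinom \<nu> \<beta>) * (f \<beta> + f (\<beta> + var i)))"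
proof -
  let ?T = "subs (\<nu> + var i)"
  let ?I = "(\<lambda>\<beta>. \<beta> + var i) ` subs \<nu>"
  define g where "g \<beta> = of_nat (if 0 < lookup \<beta> i then mchoose \<nu> (\<beta> - var i) else 0) * f \<beta>" for \<beta>
  have sub: "subs \<nu> \<subseteq> ?T" "?I \<subseteq> ?T" by (auto simp: subs_add_var)
  have "(\<Sum>\<beta>\<in>?T. of_nat (mbinom (\<nu> + var i) \<beta>) * f \<beta>) = (\<Sum>\<beta>\<in>?T. of_nat (mchoose (\<nu> + var i) \<beta>) * f \<beta>)"
    by (rule sum_mbinom_eq_sum_mchoose) auto
  also have "\<dots> = (\<Sum>\<beta>\<in>?T. of_nat (mchoose \<nu> \<beta>) * f \<beta>) + (\<Sum>\<beta>\<in>?T. g \<beta>)"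
    unfolding mchoose_add_var g_def by (simp add: sum.distrib distrib_right)
  also have "(\<Sum>\<beta>\<in>?T. of_nat (mchoose \<nu> \<beta>) * f \<beta>) = (\<Sum>\<beta>\<in>subs \<nu>. of_nat (mbinom \<nu> \<beta>) * f \<beta>)"
    by (rule sum_mbinom_eq_sum_mchoose[symmetric]) (use sub in auto)
  also have "(\<Sum>\<beta>\<in>?T. g \<beta>) = (\<Sum>\<beta>\<in>?I. g \<beta>)"
  proof (rule sum.mono_neutral_right)
    show "\<forall>\<beta>\<in>?T - ?I. g \<beta> = 0"
    proof
      fix \<beta> assume b: "\<beta> \<in> ?T - ?I"
      show "g \<beta> = 0"
      proof (cases "0 < lookup \<beta> i")
        case True
        then have "\<beta> = (\<beta> - var i) + var i" by (simp add: diff_var_add_var)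
        then have "\<beta> - var i \<notin> subs \<nu>" using b by (metis DiffD2 image_eqI)
        then show ?thesis by (simp add: g_def mchoose_eq_0)
      qed (simp add: g_def)
    qed
  qed (use sub in auto)
  also have "\<dots> = (\<Sum>\<beta>\<in>subs \<nu>. g (\<beta> + var i))"
    by (rule sum.reindex_cong[where l="\<lambda>\<beta>. \<beta> + var i"]) (auto simp: inj_on_def)
  also have "\<dots> = (\<Sum>\<beta>\<in>subs \<nu>. of_nat (mbinom \<nu> \<beta>) * f (\<beta> + var i))"
    by (rule sum.cong) (auto simp: g_def mchoose_eq_mbinom)
  finally show ?thesis by (simp add: distrib_left sum.distrib)
qed

lemma sum_mbinom_times_lookup:
  fixes F :: "mono \<Rightarrow> 'a::comm_semiring_1"
  assumes j: "0 < lookup \<nu> j"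
  shows "(\<Sum>\<beta>\<in>subs \<nu>. of_nat (mbinom \<nu> \<beta>) * (of_nat (lookup \<beta> j) * F \<beta>))
       = of_nat (lookup \<nu> j) * (\<Sum>\<beta>\<in>subs (\<nu> - var j). of_nat (mbinom (\<nu> - var j) \<beta>) * F (\<beta> + var j))"
proof -
  let ?T = "subs \<nu>"
  let ?I = "(\<lambda>\<beta>. \<beta> + var j) ` subs (\<nu> - var j)"
  define g where
    "g \<beta> = of_nat (if 0 < lookup \<beta> j then lookup \<nu> j * mchoose (\<nu> - var j) (\<beta> - var j) else 0) * F \<beta>"
    for \<beta>
  have sub: "?I \<subseteq> ?T" using subs_add_var[of "\<nu> - var j" j] diff_var_add_var[OF j] by auto
  have "(\<Sum>\<beta>\<in>?T. of_nat (mbinom \<nu> \<beta>) * (of_nat (lookup \<beta> j) * F \<beta>))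
      = (\<Sum>\<beta>\<in>?T. of_nat (mchoose \<nu> \<beta>) * (of_nat (lookup \<beta> j) * F \<beta>))"
    by (rule sum_mbinom_eq_sum_mchoose) auto
  also have "\<dots> = (\<Sum>\<beta>\<in>?T. g \<beta>)"
  proof (rule sum.cong)
    fix \<beta>
    show "of_nat (mchoose \<nu> \<beta>) * (of_nat (lookup \<beta> j) * F \<beta>) = g \<beta>"
    proof (cases "0 < lookup \<beta> j")
      case True
      have "of_nat (mchoose \<nu> \<beta>) * (of_nat (lookup \<beta> j) * F \<beta>) = of_nat (mchoose \<nu> \<beta> * lookup \<beta> j) * F \<beta>"
        by (simp add: mult.assoc)
      then show ?thesis unfolding mchoose_absorb[OF True] g_def using True by simp
    qed (simp add: g_def)
  qed simp
  also have "\<dots> = (\<Sum>\<beta>\<in>?I. g \<beta>)"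
  proof (rule sum.mono_neutral_right)
    show "\<forall>\<beta>\<in>?T - ?I. g \<beta> = 0"
    proof
      fix \<beta> assume b: "\<beta> \<in> ?T - ?I"
      show "g \<beta> = 0"
      proof (cases "0 < lookup \<beta> j")
        case True
        then have "\<beta> = (\<beta> - var j) + var j" by (simp add: diff_var_add_var)
        then have "\<beta> - var j \<notin> subs (\<nu> - var j)" using b by (metis DiffD2 image_eqI)
        then show ?thesis by (simp add: g_def mchoose_eq_0)
      qed (simp add: g_def)
    qed
  qed (use sub in auto)
  also have "\<dots> = (\<Sum>\<beta>\<in>subs (\<nu> - var j). g (\<beta> + var j))"
    by (rule sum.reindex_cong[where l="\<lambda>\<beta>. \<beta> + var j"]) (auto simp: inj_on_def)
  also have "\<dots> = (\<Sum>\<beta>\<in>subs (\<nu> - var j).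
      of_nat (lookup \<nu> j) * (of_nat (mbinom (\<nu> - var j) \<beta>) * F (\<beta> + var j)))"
    by (rule sum.cong) (auto simp: g_def mchoose_eq_mbinom mult.assoc)
  finally show ?thesis by (simp add: sum_distrib_left)
qed

lemma sum_mbinom_times_lookup_complement:
  fixes F :: "mono \<Rightarrow> 'a::comm_semiring_1"
  assumes j: "0 < lookup \<nu> j"
  shows "(\<Sum>\<beta>\<in>subs \<nu>. of_nat (mbinom \<nu> \<beta>) * (of_nat (lookup \<nu> j - lookup \<beta> j) * F \<beta>))
       = of_nat (lookup \<nu> j) * (\<Sum>\<beta>\<in>subs (\<nu> - var j). of_nat (mbinom (\<nu> - var j) \<beta>) * F \<beta>)"
proof -
  have sub: "subs (\<nu> - var j) \<subseteq> subs \<nu>"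
    by (auto simp: subs_iff) (meson diff_le_self order_trans)
  have "(\<Sum>\<beta>\<in>subs \<nu>. of_nat (mbinom \<nu> \<beta>) * (of_nat (lookup \<nu> j - lookup \<beta> j) * F \<beta>))
      = (\<Sum>\<beta>\<in>subs \<nu>. of_nat (mchoose \<nu> \<beta> * (lookup \<nu> j - lookup \<beta> j)) * F \<beta>)"
    by (subst sum_mbinom_eq_sum_mchoose[where T = "subs \<nu>"]) (auto simp: mult.assoc)
  also have "\<dots> = of_nat (lookup \<nu> j) * (\<Sum>\<beta>\<in>subs \<nu>. of_nat (mchoose (\<nu> - var j) \<beta>) * F \<beta>)"
    unfolding mchoose_absorb_complement[OF j] by (simp add: sum_distrib_left mult.assoc)
  also have "(\<Sum>\<beta>\<in>subs \<nu>. of_nat (mchoose (\<nu> - var j) \<beta>) * F \<beta>)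
      = (\<Sum>\<beta>\<in>subs (\<nu> - var j). of_nat (mbinom (\<nu> - var j) \<beta>) * F \<beta>)"
    by (rule sum_mbinom_eq_sum_mchoose[symmetric]) (use sub in auto)
  finally show ?thesis .
qed

lemma sum_mbinom_concentrated_on_vars:
  fixes h :: "mono \<Rightarrow> 'a::comm_semiring_1"
  assumes "\<And>\<delta>. h \<delta> \<noteq> 0 \<Longrightarrow> \<exists>j. \<delta> = var j"
  shows "(\<Sum>\<delta>\<in>subs \<gamma>. of_nat (mbinom \<gamma> \<delta>) * h \<delta>) = (\<Sum>j\<in>keys \<gamma>. of_nat (lookup \<gamma> j) * h (var j))"
proof -
  have "(\<Sum>\<delta>\<in>subs \<gamma>. of_nat (mbinom \<gamma> \<delta>) * h \<delta>) = (\<Sum>\<delta>\<in>var ` keys \<gamma>. of_nat (mbinom \<gamma> \<delta>) * h \<delta>)"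
  proof (rule sum.mono_neutral_right)
    show "\<forall>\<delta>\<in>subs \<gamma> - var ` keys \<gamma>. of_nat (mbinom \<gamma> \<delta>) * h \<delta> = 0"
      using assms var_in_subs_iff by (metis DiffE image_eqI mult_zero_right)
  qed (auto simp: var_in_subs_iff)
  also have "\<dots> = (\<Sum>j\<in>keys \<gamma>. of_nat (mbinom \<gamma> (var j)) * h (var j))"
    by (rule sum.reindex_cong[where l=var]) (auto simp: inj_on_def)
  also have "\<dots> = (\<Sum>j\<in>keys \<gamma>. of_nat (lookup \<gamma> j) * h (var j))"
    by (rule sum.cong) (auto simp: mbinom_var)
  finally show ?thesis .
qed

lemma sum_keys_extend:
  fixes h :: "nat \<Rightarrow> 'a::comm_semiring_1"
  shows "finite S \<Longrightarrow> keys \<alpha> \<subseteq> S \<Longrightarrow>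
    (\<Sum>j\<in>keys \<alpha>. of_nat (lookup \<alpha> j) * h j) = (\<Sum>j\<in>S. of_nat (lookup \<alpha> j) * h j)"
  by (rule sum.mono_neutral_left) (auto simp: in_keys_iff)

section \<open>Bicharacters and the generator recursion\<close>

lemma bichar_zero_left: "bichar r \<Longrightarrow> r 0 \<beta> = (if \<beta> = 0 then 1 else 0)"
  and bichar_zero_right: "bichar r \<Longrightarrow> r \<alpha> 0 = (if \<alpha> = 0 then 1 else 0)"
  and bichar_add_left:
    "bichar r \<Longrightarrow> r (\<alpha> + \<beta>) \<gamma> = (\<Sum>\<delta>\<in>subs \<gamma>. of_nat (mbinom \<gamma> \<delta>) * r \<alpha> \<delta> * r \<beta> (\<gamma> - \<delta>))"
  and bichar_add_right:
    "bichar r \<Longrightarrow> r \<alpha> (\<beta> + \<gamma>) = (\<Sum>\<delta>\<in>subs \<alpha>. of_nat (mbinom \<alpha> \<delta>) * r \<delta> \<beta> * r (\<alpha> - \<delta>) \<gamma>)"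
  unfolding bichar_def by blast+

lemma bichar_var_left_nonzero:
  assumes r: "bichar r" and nz: "r (var i) \<delta> \<noteq> 0"
  shows "\<exists>j. \<delta> = var j"
proof (cases "\<delta> = 0")
  case False
  then obtain j where j: "\<delta> = (\<delta> - var j) + var j" by (rule mono_neq_zero_obtains_var)
  have "r (var i) ((\<delta> - var j) + var j) = r 0 (\<delta> - var j) * r (var i) (var j)"
    by (simp add: bichar_add_right[OF r] subs_var bichar_zero_left[OF r] bichar_zero_right[OF r])
  with nz j have "\<delta> - var j = 0" by (auto simp: bichar_zero_left[OF r] split: if_splits)
  then show ?thesis using j by auto
qed (use nz bichar_zero_right[OF r] in simp)

lemma bichar_var_right_nonzero:
  assumes r: "bichar r" and nz: "r \<delta> (var i) \<noteq> 0"
  shows "\<exists>j. \<delta> = var j"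
proof (cases "\<delta> = 0")
  case False
  then obtain j where j: "\<delta> = (\<delta> - var j) + var j" by (rule mono_neq_zero_obtains_var)
  have "r ((\<delta> - var j) + var j) (var i) = r (\<delta> - var j) 0 * r (var j) (var i)"
    by (simp add: bichar_add_left[OF r] subs_var bichar_zero_left[OF r] bichar_zero_right[OF r])
  with nz j have "\<delta> - var j = 0" by (auto simp: bichar_zero_right[OF r] split: if_splits)
  then show ?thesis using j by auto
qed (use nz bichar_zero_left[OF r] in simp)

lemma bichar_add_var_left:
  assumes r: "bichar r"
  shows "r (\<alpha> + var i) \<gamma> = (\<Sum>j\<in>keys \<gamma>. of_nat (lookup \<gamma> j) * r (var i) (var j) * r \<alpha> (\<gamma> - var j))"
proof -
  have "r (var i + \<alpha>) \<gamma> = (\<Sum>\<delta>\<in>subs \<gamma>. of_nat (mbinom \<gamma> \<delta>) * (r (var i) \<delta> * r \<alpha> (\<gamma> - \<delta>)))"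
    by (simp add: bichar_add_left[OF r] mult.assoc)
  also have "\<dots> = (\<Sum>j\<in>keys \<gamma>. of_nat (lookup \<gamma> j) * (r (var i) (var j) * r \<alpha> (\<gamma> - var j)))"
    by (rule sum_mbinom_concentrated_on_vars) (use bichar_var_left_nonzero[OF r] in \<open>metis mult_zero_left\<close>)
  finally show ?thesis by (simp add: add.commute mult.assoc)
qed

lemma bichar_add_var_right:
  assumes r: "bichar r"
  shows "r \<alpha> (\<gamma> + var i) = (\<Sum>j\<in>keys \<alpha>. of_nat (lookup \<alpha> j) * r (var j) (var i) * r (\<alpha> - var j) \<gamma>)"
proof -
  have "r \<alpha> (var i + \<gamma>) = (\<Sum>\<delta>\<in>subs \<alpha>. of_nat (mbinom \<alpha> \<delta>) * (r \<delta> (var i) * r (\<alpha> - \<delta>) \<gamma>))"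
    by (simp add: bichar_add_right[OF r] mult.assoc)
  also have "\<dots> = (\<Sum>j\<in>keys \<alpha>. of_nat (lookup \<alpha> j) * (r (var j) (var i) * r (\<alpha> - var j) \<gamma>))"
    by (rule sum_mbinom_concentrated_on_vars) (use bichar_var_right_nonzero[OF r] in \<open>metis mult_zero_left\<close>)
  finally show ?thesis by (simp add: add.commute mult.assoc)
qed

text \<open>The recursion in the first argument obeyed by a bicharacter with generator values
  \<open>c i j = r (var i) (var j)\<close>. It is preserved by convolution and inversion,
  which need not produce bicharacters, and it determines the function completely.\<close>
definition bichar_rec :: "(nat \<Rightarrow> nat \<Rightarrow> 'a::comm_ring_1) \<Rightarrow> (mono \<Rightarrow> mono \<Rightarrow> 'a) \<Rightarrow> bool" where
  "bichar_rec c f \<longleftrightarrow> (\<forall>\<gamma>. f 0 \<gamma> = (if \<gamma> = 0 then 1 else 0)) \<and>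
     (\<forall>\<alpha> i \<gamma>. f (\<alpha> + var i) \<gamma> = (\<Sum>j\<in>keys \<gamma>. of_nat (lookup \<gamma> j) * c i j * f \<alpha> (\<gamma> - var j)))"

lemma bichar_rec_unique:
  assumes "bichar_rec c f" "bichar_rec c g"
  shows "f = g"
proof -
  have "\<forall>\<gamma>. f \<alpha> \<gamma> = g \<alpha> \<gamma>" for \<alpha>
    by (induction \<alpha> rule: mono_induct) (use assms in \<open>simp_all add: bichar_rec_def\<close>)
  then show ?thesis by blast
qed

lemma bichar_rec_var_var:
  assumes "bichar_rec c f"
  shows "f (var i) (var j) = c i j"
proof -
  have "f (0 + var i) (var j) = (\<Sum>k\<in>keys (var j). of_nat (lookup (var j) k) * c i k * f 0 (var j - var k))"
    using assms unfolding bichar_rec_def by blast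
  also have "\<dots> = c i j" using assms unfolding bichar_rec_def by simp
  finally show ?thesis by simp
qed

lemma bichar_rec_bichar: "bichar r \<Longrightarrow> bichar_rec (\<lambda>i j. r (var i) (var j)) r"
  unfolding bichar_rec_def using bichar_zero_left bichar_add_var_left by blast

lemma bichar_rec_transp: "bichar r \<Longrightarrow> bichar_rec (\<lambda>i j. r (var j) (var i)) (transp r)"
  unfolding bichar_rec_def transp_def using bichar_zero_right bichar_add_var_right by blast

lemma bichar_rec_binv: "bichar_rec c r \<Longrightarrow> bichar_rec (\<lambda>i j. - c i j) (binv r)"
  unfolding bichar_rec_def binv_def by (simp add: mdeg_add sum_distrib_left mult_ac)

definition conv_inner :: "(mono \<Rightarrow> mono \<Rightarrow> 'a::comm_ring_1) \<Rightarrow> (mono \<Rightarrow> mono \<Rightarrow> 'a) \<Rightarrow> mono \<Rightarrow> mono \<Rightarrow> mono \<Rightarrow> 'a"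
  where "conv_inner r t \<eta> \<zeta> \<gamma> = (\<Sum>\<delta>\<in>subs \<gamma>. of_nat (mbinom \<gamma> \<delta>) * (r \<eta> \<delta> * t \<zeta> (\<gamma> - \<delta>)))"

lemma conv_eq_sum_conv_inner:
  "conv r t \<alpha> \<gamma> = (\<Sum>\<eta>\<in>subs \<alpha>. of_nat (mbinom \<alpha> \<eta>) * conv_inner r t \<eta> (\<alpha> - \<eta>) \<gamma>)"
  unfolding conv_def conv_inner_def by (simp add: sum_distrib_left mult_ac)

lemma conv_inner_add_var_left:
  assumes "bichar_rec a r"
  shows "conv_inner r t (\<eta> + var i) \<zeta> \<gamma>
    = (\<Sum>j\<in>keys \<gamma>. of_nat (lookup \<gamma> j) * a i j * conv_inner r t \<eta> \<zeta> (\<gamma> - var j))"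
proof -
  have "conv_inner r t (\<eta> + var i) \<zeta> \<gamma> = (\<Sum>\<delta>\<in>subs \<gamma>. \<Sum>j\<in>keys \<gamma>.
      a i j * (of_nat (mbinom \<gamma> \<delta>) * (of_nat (lookup \<delta> j) * (r \<eta> (\<delta> - var j) * t \<zeta> (\<gamma> - \<delta>)))))"
    unfolding conv_inner_def
  proof (rule sum.cong)
    fix \<delta> assume "\<delta> \<in> subs \<gamma>"
    have "r (\<eta> + var i) \<delta> = (\<Sum>j\<in>keys \<delta>. of_nat (lookup \<delta> j) * (a i j * r \<eta> (\<delta> - var j)))"
      using assms unfolding bichar_rec_def by (simp add: mult.assoc)
    also have "\<dots> = (\<Sum>j\<in>keys \<gamma>. of_nat (lookup \<delta> j) * (a i j * r \<eta> (\<delta> - var j)))"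
      by (rule sum_keys_extend) (simp_all add: keys_subs \<open>\<delta> \<in> subs \<gamma>\<close>)
    finally show "of_nat (mbinom \<gamma> \<delta>) * (r (\<eta> + var i) \<delta> * t \<zeta> (\<gamma> - \<delta>)) = (\<Sum>j\<in>keys \<gamma>.
        a i j * (of_nat (mbinom \<gamma> \<delta>) * (of_nat (lookup \<delta> j) * (r \<eta> (\<delta> - var j) * t \<zeta> (\<gamma> - \<delta>)))))"
      by (simp add: sum_distrib_left sum_distrib_right mult_ac)
  qed simp
  also have "\<dots> = (\<Sum>j\<in>keys \<gamma>. a i j * (\<Sum>\<delta>\<in>subs \<gamma>.
      of_nat (mbinom \<gamma> \<delta>) * (of_nat (lookup \<delta> j) * (r \<eta> (\<delta> - var j) * t \<zeta> (\<gamma> - \<delta>)))))"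
    by (subst sum.swap) (simp add: sum_distrib_left)
  also have "\<dots> = (\<Sum>j\<in>keys \<gamma>. of_nat (lookup \<gamma> j) * a i j * conv_inner r t \<eta> \<zeta> (\<gamma> - var j))"
    by (rule sum.cong)
      (simp_all add: sum_mbinom_times_lookup in_keys_iff_pos conv_inner_def diff_add_var mult_ac)
  finally show ?thesis .
qed

lemma conv_inner_add_var_right:
  assumes "bichar_rec b t"
  shows "conv_inner r t \<eta> (\<zeta> + var i) \<gamma>
    = (\<Sum>j\<in>keys \<gamma>. of_nat (lookup \<gamma> j) * b i j * conv_inner r t \<eta> \<zeta> (\<gamma> - var j))"
proof -
  have "conv_inner r t \<eta> (\<zeta> + var i) \<gamma> = (\<Sum>\<delta>\<in>subs \<gamma>. \<Sum>j\<in>keys \<gamma>.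
      b i j * (of_nat (mbinom \<gamma> \<delta>) * (of_nat (lookup \<gamma> j - lookup \<delta> j) * (r \<eta> \<delta> * t \<zeta> ((\<gamma> - var j) - \<delta>)))))"
    unfolding conv_inner_def
  proof (rule sum.cong)
    fix \<delta>
    have "t (\<zeta> + var i) (\<gamma> - \<delta>)
        = (\<Sum>j\<in>keys (\<gamma> - \<delta>). of_nat (lookup (\<gamma> - \<delta>) j) * (b i j * t \<zeta> (\<gamma> - \<delta> - var j)))"
      using assms unfolding bichar_rec_def by (simp add: mult.assoc)
    also have "\<dots> = (\<Sum>j\<in>keys \<gamma>. of_nat (lookup (\<gamma> - \<delta>) j) * (b i j * t \<zeta> (\<gamma> - \<delta> - var j)))"
      by (rule sum_keys_extend) (simp_all add: keys_diff_subset)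
    finally show "of_nat (mbinom \<gamma> \<delta>) * (r \<eta> \<delta> * t (\<zeta> + var i) (\<gamma> - \<delta>)) = (\<Sum>j\<in>keys \<gamma>.
        b i j * (of_nat (mbinom \<gamma> \<delta>) * (of_nat (lookup \<gamma> j - lookup \<delta> j) * (r \<eta> \<delta> * t \<zeta> ((\<gamma> - var j) - \<delta>)))))"
      by (simp add: sum_distrib_left diff_diff_var_commute mult_ac)
  qed simp
  also have "\<dots> = (\<Sum>j\<in>keys \<gamma>. b i j * (\<Sum>\<delta>\<in>subs \<gamma>.
      of_nat (mbinom \<gamma> \<delta>) * (of_nat (lookup \<gamma> j - lookup \<delta> j) * (r \<eta> \<delta> * t \<zeta> ((\<gamma> - var j) - \<delta>)))))"
    by (subst sum.swap) (simp add: sum_distrib_left)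
  also have "\<dots> = (\<Sum>j\<in>keys \<gamma>. of_nat (lookup \<gamma> j) * b i j * conv_inner r t \<eta> \<zeta> (\<gamma> - var j))"
  proof (rule sum.cong)
    fix j assume "j \<in> keys \<gamma>"
    then show "b i j * (\<Sum>\<delta>\<in>subs \<gamma>. of_nat (mbinom \<gamma> \<delta>) *
        (of_nat (lookup \<gamma> j - lookup \<delta> j) * (r \<eta> \<delta> * t \<zeta> ((\<gamma> - var j) - \<delta>))))
      = of_nat (lookup \<gamma> j) * b i j * conv_inner r t \<eta> \<zeta> (\<gamma> - var j)"
      by (simp add: sum_mbinom_times_lookup_complement in_keys_iff_pos conv_inner_def)
  qed simp
  finally show ?thesis .
qed

lemma bichar_rec_conv:
  assumes ra: "bichar_rec a r" and tb: "bichar_rec b t"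
  shows "bichar_rec (\<lambda>i j. a i j + b i j) (conv r t)"
  unfolding bichar_rec_def
proof (intro conjI allI)
  fix \<gamma>
  have "conv r t 0 \<gamma> = (\<Sum>\<delta>\<in>subs \<gamma>. of_nat (mbinom \<gamma> \<delta>) * r 0 \<delta> * t 0 (\<gamma> - \<delta>))"
    by (simp add: conv_def)
  also have "\<dots> = (\<Sum>\<delta>\<in>subs \<gamma>. if \<delta> = 0 then t 0 \<gamma> else 0)"
    using ra[unfolded bichar_rec_def] by (intro sum.cong) auto
  finally have "conv r t 0 \<gamma> = t 0 \<gamma>" by simp
  then show "conv r t 0 \<gamma> = (if \<gamma> = 0 then 1 else 0)"
    using tb[unfolded bichar_rec_def] by simp
next
  fix \<alpha> i \<gamma>
  have "conv r t (\<alpha> + var i) \<gamma> = (\<Sum>\<eta>\<in>subs \<alpha>. of_nat (mbinom \<alpha> \<eta>) *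
      (conv_inner r t \<eta> ((\<alpha> - \<eta>) + var i) \<gamma> + conv_inner r t (\<eta> + var i) (\<alpha> - \<eta>) \<gamma>))"
    unfolding conv_eq_sum_conv_inner sum_mbinom_add_var
    by (intro sum.cong) (simp_all add: add_var_diff_subs)
  also have "\<dots> = (\<Sum>\<eta>\<in>subs \<alpha>. \<Sum>j\<in>keys \<gamma>. of_nat (lookup \<gamma> j) * (a i j + b i j) *
      (of_nat (mbinom \<alpha> \<eta>) * conv_inner r t \<eta> (\<alpha> - \<eta>) (\<gamma> - var j)))"
    unfolding conv_inner_add_var_left[OF ra] conv_inner_add_var_right[OF tb]
    by (simp add: sum_distrib_left sum.distrib[symmetric] algebra_simps)
  also have "\<dots> = (\<Sum>j\<in>keys \<gamma>. of_nat (lookup \<gamma> j) * (a i j + b i j) * conv r t \<alpha> (\<gamma> - var j))"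
    by (subst sum.swap) (simp add: conv_eq_sum_conv_inner sum_distrib_left)
  finally show "conv r t (\<alpha> + var i) \<gamma>
    = (\<Sum>j\<in>keys \<gamma>. of_nat (lookup \<gamma> j) * (a i j + b i j) * conv r t \<alpha> (\<gamma> - var j))" .
qed

section \<open>The contraction and the map EQ\<close>

text \<open>\<open>contract r \<nu> = r(m' \<otimes> m'')\<close> for \<open>m = x\<^sup>\<nu>\<close>; by coassociativity
  \<open>EQ\<^sub>r(m) = contract r (m') m''\<close>.\<close>
definition contract :: "(mono \<Rightarrow> mono \<Rightarrow> 'a::comm_ring_1) \<Rightarrow> mono \<Rightarrow> 'a" where
  "contract r \<nu> = (\<Sum>\<beta>\<in>subs \<nu>. of_nat (mbinom \<nu> \<beta>) * r \<beta> (\<nu> - \<beta>))"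

lemma contract_0: "bichar r \<Longrightarrow> contract r 0 = 1"
  by (simp add: contract_def bichar_zero_left)

lemma sum_mbinom_bichar_add_var_left:
  assumes r: "bichar r"
  shows "(\<Sum>\<beta>\<in>subs \<nu>. of_nat (mbinom \<nu> \<beta>) * r (\<beta> + var i) (\<nu> - \<beta>))
    = (\<Sum>j\<in>keys \<nu>. of_nat (lookup \<nu> j) * r (var i) (var j) * contract r (\<nu> - var j))"
proof -
  have "(\<Sum>\<beta>\<in>subs \<nu>. of_nat (mbinom \<nu> \<beta>) * r (\<beta> + var i) (\<nu> - \<beta>)) = (\<Sum>\<beta>\<in>subs \<nu>. \<Sum>j\<in>keys \<nu>.
      r (var i) (var j) * (of_nat (mbinom \<nu> \<beta>) * (of_nat (lookup \<nu> j - lookup \<beta> j) * r \<beta> ((\<nu> - var j) - \<beta>))))"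
  proof (rule sum.cong)
    fix \<beta>
    have "r (\<beta> + var i) (\<nu> - \<beta>)
        = (\<Sum>j\<in>keys (\<nu> - \<beta>). of_nat (lookup (\<nu> - \<beta>) j) * (r (var i) (var j) * r \<beta> (\<nu> - \<beta> - var j)))"
      by (simp add: bichar_add_var_left[OF r] mult.assoc)
    also have "\<dots> = (\<Sum>j\<in>keys \<nu>. of_nat (lookup (\<nu> - \<beta>) j) * (r (var i) (var j) * r \<beta> (\<nu> - \<beta> - var j)))"
      by (rule sum_keys_extend) (simp_all add: keys_diff_subset)
    finally show "of_nat (mbinom \<nu> \<beta>) * r (\<beta> + var i) (\<nu> - \<beta>) = (\<Sum>j\<in>keys \<nu>.
      r (var i) (var j) * (of_nat (mbinom \<nu> \<beta>) * (of_nat (lookup \<nu> j - lookup \<beta> j) * r \<beta> ((\<nu> - var j) - \<beta>))))"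
      by (simp add: sum_distrib_left diff_diff_var_commute mult_ac)
  qed simp
  also have "\<dots> = (\<Sum>j\<in>keys \<nu>. r (var i) (var j) * (\<Sum>\<beta>\<in>subs \<nu>.
      of_nat (mbinom \<nu> \<beta>) * (of_nat (lookup \<nu> j - lookup \<beta> j) * r \<beta> ((\<nu> - var j) - \<beta>))))"
    by (subst sum.swap) (simp add: sum_distrib_left)
  also have "\<dots> = (\<Sum>j\<in>keys \<nu>. of_nat (lookup \<nu> j) * r (var i) (var j) * contract r (\<nu> - var j))"
    by (rule sum.cong) (simp_all add: sum_mbinom_times_lookup_complement in_keys_iff_pos contract_def)
  finally show ?thesis .
qed

lemma sum_mbinom_bichar_add_var_right:
  assumes r: "bichar r"
  shows "(\<Sum>\<beta>\<in>subs \<nu>. of_nat (mbinom \<nu> \<beta>) * r \<beta> ((\<nu> - \<beta>) + var i))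
    = (\<Sum>j\<in>keys \<nu>. of_nat (lookup \<nu> j) * r (var j) (var i) * contract r (\<nu> - var j))"
proof -
  have "(\<Sum>\<beta>\<in>subs \<nu>. of_nat (mbinom \<nu> \<beta>) * r \<beta> ((\<nu> - \<beta>) + var i)) = (\<Sum>\<beta>\<in>subs \<nu>. \<Sum>j\<in>keys \<nu>.
      r (var j) (var i) * (of_nat (mbinom \<nu> \<beta>) * (of_nat (lookup \<beta> j) * r (\<beta> - var j) (\<nu> - \<beta>))))"
  proof (rule sum.cong)
    fix \<beta> assume "\<beta> \<in> subs \<nu>"
    have "r \<beta> ((\<nu> - \<beta>) + var i)
        = (\<Sum>j\<in>keys \<beta>. of_nat (lookup \<beta> j) * (r (var j) (var i) * r (\<beta> - var j) (\<nu> - \<beta>)))"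
      by (simp add: bichar_add_var_right[OF r] mult.assoc)
    also have "\<dots> = (\<Sum>j\<in>keys \<nu>. of_nat (lookup \<beta> j) * (r (var j) (var i) * r (\<beta> - var j) (\<nu> - \<beta>)))"
      by (rule sum_keys_extend) (simp_all add: keys_subs \<open>\<beta> \<in> subs \<nu>\<close>)
    finally show "of_nat (mbinom \<nu> \<beta>) * r \<beta> ((\<nu> - \<beta>) + var i) = (\<Sum>j\<in>keys \<nu>.
      r (var j) (var i) * (of_nat (mbinom \<nu> \<beta>) * (of_nat (lookup \<beta> j) * r (\<beta> - var j) (\<nu> - \<beta>))))"
      by (simp add: sum_distrib_left mult_ac)
  qed simp
  also have "\<dots> = (\<Sum>j\<in>keys \<nu>. r (var j) (var i) * (\<Sum>\<beta>\<in>subs \<nu>.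
      of_nat (mbinom \<nu> \<beta>) * (of_nat (lookup \<beta> j) * r (\<beta> - var j) (\<nu> - \<beta>))))"
    by (subst sum.swap) (simp add: sum_distrib_left)
  also have "\<dots> = (\<Sum>j\<in>keys \<nu>. of_nat (lookup \<nu> j) * r (var j) (var i) * contract r (\<nu> - var j))"
    by (rule sum.cong)
      (simp_all add: sum_mbinom_times_lookup in_keys_iff_pos contract_def diff_add_var mult_ac)
  finally show ?thesis .
qed

lemma contract_add_var:
  assumes r: "bichar r"
  shows "contract r (\<nu> + var i) = (\<Sum>j\<in>keys \<nu>.
    of_nat (lookup \<nu> j) * (r (var i) (var j) + r (var j) (var i)) * contract r (\<nu> - var j))"
proof -
  have "contract r (\<nu> + var i) = (\<Sum>\<beta>\<in>subs \<nu>. of_nat (mbinom \<nu> \<beta>) * r \<beta> ((\<nu> - \<beta>) + var i))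
      + (\<Sum>\<beta>\<in>subs \<nu>. of_nat (mbinom \<nu> \<beta>) * r (\<beta> + var i) (\<nu> - \<beta>))"
    unfolding contract_def sum_mbinom_add_var
    by (simp add: add_var_diff_subs distrib_left sum.distrib cong: sum.cong)
  then show ?thesis
    unfolding sum_mbinom_bichar_add_var_left[OF r] sum_mbinom_bichar_add_var_right[OF r]
    by (simp add: sum.distrib[symmetric] algebra_simps)
qed

lemma contract_eqI:
  assumes r: "bichar r" and r': "bichar r'"
    and sym: "\<And>i j. r (var i) (var j) + r (var j) (var i) = r' (var i) (var j) + r' (var j) (var i)"
  shows "contract r = contract r'"
proof
  fix \<nu> show "contract r \<nu> = contract r' \<nu>"
  proof (induction \<nu> rule: measure_induct_rule[of mdeg])
    case (less \<nu>)
    show ?case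
    proof (cases "\<nu> = 0")
      case False
      then obtain i where i: "\<nu> = (\<nu> - var i) + var i" by (rule mono_neq_zero_obtains_var)
      define \<mu> where "\<mu> = \<nu> - var i"
      have "mdeg (\<mu> - var j) < mdeg \<nu>" if "j \<in> keys \<mu>" for j
        using mdeg_diff_var_less[of \<mu> j] that i mdeg_add[of \<mu> "var i"] by (simp add: in_keys_iff_pos \<mu>_def)
      then have "contract r (\<mu> + var i) = contract r' (\<mu> + var i)"
        unfolding contract_add_var[OF r] contract_add_var[OF r'] sym by (intro sum.cong) (simp_all add: less)
      then show ?thesis using i by (simp add: \<mu>_def)
    qed (simp add: contract_0[OF r] contract_0[OF r'])
  qed
qed

lemma single_sum: "Poly_Mapping.single k (\<Sum>x\<in>A. g x) = (\<Sum>x\<in>A. Poly_Mapping.single k (g x))"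
  by (induction A rule: infinite_finite_induct) (simp_all add: single_add)

lemma sum_subs_subs_reindex:
  "(\<Sum>\<beta>\<in>subs \<alpha>. \<Sum>\<gamma>\<in>subs (\<alpha> - \<beta>). F \<beta> \<gamma>) = (\<Sum>\<nu>\<in>subs \<alpha>. \<Sum>\<beta>\<in>subs \<nu>. F \<beta> (\<nu> - \<beta>))"
proof -
  have self_in: "\<beta> \<in> subs (\<beta> + \<gamma>)" for \<beta> \<gamma> :: mono
    by (simp add: subs_iff)
  have sum_in: "\<beta> + \<gamma> \<in> subs \<alpha>" if "\<beta> \<in> subs \<alpha>" "\<gamma> \<in> subs (\<alpha> - \<beta>)" for \<beta> \<gamma>
    using that by (auto simp: subs_iff) (metis le_diff_conv2 add.commute)
  have trans: "\<beta> \<in> subs \<alpha>" and diff_in: "\<nu> - \<beta> \<in> subs (\<alpha> - \<beta>)"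
    and add_diff: "\<beta> + (\<nu> - \<beta>) = \<nu>" if "\<nu> \<in> subs \<alpha>" "\<beta> \<in> subs \<nu>" for \<nu> \<beta>
    using that by (auto simp: subs_iff intro: order_trans diff_le_mono poly_mapping_eqI)
  have "(\<Sum>\<beta>\<in>subs \<alpha>. \<Sum>\<gamma>\<in>subs (\<alpha> - \<beta>). F \<beta> \<gamma>) = (\<Sum>(\<beta>, \<gamma>)\<in>Sigma (subs \<alpha>) (\<lambda>\<beta>. subs (\<alpha> - \<beta>)). F \<beta> \<gamma>)"
    by (rule sum.Sigma) auto
  also have "\<dots> = (\<Sum>(\<nu>, \<beta>)\<in>Sigma (subs \<alpha>) subs. F \<beta> (\<nu> - \<beta>))"
    by (rule sum.reindex_bij_witness[where j = "\<lambda>(\<beta>, \<gamma>). (\<beta> + \<gamma>, \<beta>)" and i = "\<lambda>(\<nu>, \<beta>). (\<beta>, \<nu> - \<beta>)"])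
      (auto intro: self_in sum_in trans diff_in simp: add_diff)
  also have "\<dots> = (\<Sum>\<nu>\<in>subs \<alpha>. \<Sum>\<beta>\<in>subs \<nu>. F \<beta> (\<nu> - \<beta>))"
    by (rule sum.Sigma[symmetric]) auto
  finally show ?thesis .
qed

lemma sum_subs_subs_single_eq_contract:
  "(\<Sum>\<beta>\<in>subs \<alpha>. \<Sum>\<gamma>\<in>subs (\<alpha> - \<beta>).
      Poly_Mapping.single (\<alpha> - \<beta> - \<gamma>) (c * of_nat (mbinom \<alpha> \<beta> * mbinom (\<alpha> - \<beta>) \<gamma>) * r \<beta> \<gamma>))
    = (\<Sum>\<nu>\<in>subs \<alpha>. Poly_Mapping.single (\<alpha> - \<nu>) (c * of_nat (mbinom \<alpha> \<nu>) * contract r \<nu>))"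
proof -
  have "(\<Sum>\<beta>\<in>subs \<alpha>. \<Sum>\<gamma>\<in>subs (\<alpha> - \<beta>).
      Poly_Mapping.single (\<alpha> - \<beta> - \<gamma>) (c * of_nat (mbinom \<alpha> \<beta> * mbinom (\<alpha> - \<beta>) \<gamma>) * r \<beta> \<gamma>))
    = (\<Sum>\<nu>\<in>subs \<alpha>. \<Sum>\<beta>\<in>subs \<nu>.
      Poly_Mapping.single (\<alpha> - \<nu>) (c * of_nat (mbinom \<alpha> \<nu>) * (of_nat (mbinom \<nu> \<beta>) * r \<beta> (\<nu> - \<beta>))))"
    unfolding sum_subs_subs_reindex
  proof (intro sum.cong refl)
    fix \<nu> \<beta> assume \<nu>: "\<nu> \<in> subs \<alpha>" and \<beta>: "\<beta> \<in> subs \<nu>"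
    have "\<beta> \<in> subs \<alpha>" "\<nu> - \<beta> \<in> subs (\<alpha> - \<beta>)" and \<nu>_eq: "\<beta> + (\<nu> - \<beta>) = \<nu>"
      using \<nu> \<beta> by (auto simp: subs_iff intro: order_trans diff_le_mono poly_mapping_eqI)
    from mbinom_mult_mbinom[OF this(1,2)]
    have "mbinom \<alpha> \<beta> * mbinom (\<alpha> - \<beta>) (\<nu> - \<beta>) = mbinom \<alpha> \<nu> * mbinom \<nu> \<beta>"
      unfolding \<nu>_eq .
    moreover have "\<alpha> - \<beta> - (\<nu> - \<beta>) = \<alpha> - \<nu>"
      using \<nu> \<beta> by (intro poly_mapping_eqI) (auto simp: subs_iff)
    ultimately show "Poly_Mapping.single (\<alpha> - \<beta> - (\<nu> - \<beta>))
        (c * of_nat (mbinom \<alpha> \<beta> * mbinom (\<alpha> - \<beta>) (\<nu> - \<beta>)) * r \<beta> (\<nu> - \<beta>))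
      = Poly_Mapping.single (\<alpha> - \<nu>) (c * of_nat (mbinom \<alpha> \<nu>) * (of_nat (mbinom \<nu> \<beta>) * r \<beta> (\<nu> - \<beta>)))"
      by (simp add: mult_ac)
  qed
  then show ?thesis by (simp add: contract_def sum_distrib_left single_sum)
qed

lemma EQ_eq_sum_contract:
  "EQ r p = (\<Sum>\<alpha>\<in>keys p. \<Sum>\<nu>\<in>subs \<alpha>.
    Poly_Mapping.single (\<alpha> - \<nu>) (lookup p \<alpha> * of_nat (mbinom \<alpha> \<nu>) * contract r \<nu>))"
  unfolding EQ_def by (simp only: sum_subs_subs_single_eq_contract)

lemma lookup_EQ_zero:
  assumes "finite S" "keys p \<subseteq> S"
  shows "lookup (EQ r p) 0 = (\<Sum>\<alpha>\<in>S. lookup p \<alpha> * contract r \<alpha>)"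
proof -
  have "lookup (EQ r p) 0 = (\<Sum>\<alpha>\<in>keys p. \<Sum>\<nu>\<in>subs \<alpha>. if \<nu> = \<alpha> then lookup p \<alpha> * contract r \<alpha> else 0)"
    unfolding EQ_eq_sum_contract lookup_sum
  proof (intro sum.cong refl)
    fix \<alpha> \<nu> assume "\<nu> \<in> subs \<alpha>"
    then have "\<alpha> - \<nu> = 0 \<longleftrightarrow> \<nu> = \<alpha>"
      by (auto simp: subs_iff poly_mapping_eq_iff fun_eq_iff intro: le_antisym)
    then show "lookup (Poly_Mapping.single (\<alpha> - \<nu>) (lookup p \<alpha> * of_nat (mbinom \<alpha> \<nu>) * contract r \<nu>)) 0
      = (if \<nu> = \<alpha> then lookup p \<alpha> * contract r \<alpha> else 0)"
      by (auto simp: lookup_single)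
  qed
  also have "\<dots> = (\<Sum>\<alpha>\<in>keys p. lookup p \<alpha> * contract r \<alpha>)"
    by simp
  also have "\<dots> = (\<Sum>\<alpha>\<in>S. lookup p \<alpha> * contract r \<alpha>)"
    by (rule sum.mono_neutral_left) (use assms in \<open>auto simp: in_keys_iff\<close>)
  finally show ?thesis .
qed

lemma bichar_rec_conv_transp:
  "bichar r \<Longrightarrow> bichar_rec (\<lambda>i j. r (var i) (var j) + r (var j) (var i)) (conv r (transp r))"
  by (rule bichar_rec_conv[OF bichar_rec_bichar bichar_rec_transp])

lemma EQ_eq_if_conv_transp_eq:
  assumes r: "bichar r" and r': "bichar r'" and eq: "conv r' (transp r') = conv r (transp r)"
  shows "EQ r' = EQ r"
proof -
  have "r' (var i) (var j) + r' (var j) (var i) = r (var i) (var j) + r (var j) (var i)" for i j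
    using bichar_rec_var_var[OF bichar_rec_conv_transp[OF r], of i j]
      bichar_rec_var_var[OF bichar_rec_conv_transp[OF r'], of i j] eq by simp
  then have "contract r' = contract r" by (rule contract_eqI[OF r' r])
  then show ?thesis by (simp add: fun_eq_iff EQ_eq_sum_contract)
qed

section \<open>The intertwining identity on generators\<close>

lemma bprod_single_var_var:
  assumes s: "bichar s" and nontriv: "(1::'a::comm_ring_1) \<noteq> 0"
  shows "bprod s (Poly_Mapping.single (var i) (1::'a)) (Poly_Mapping.single (var j) 1)
    = Poly_Mapping.single 0 (s (var i) (var j)) + Poly_Mapping.single (var i + var j) 1"
  unfolding bprod_def using nontriv by (simp add: subs_var bichar_zero_left[OF s] bichar_zero_right[OF s])

lemma EQ_single_var:
  assumes r: "bichar r" and nontriv: "(1::'a::comm_ring_1) \<noteq> 0"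
  shows "EQ r (Poly_Mapping.single (var i) (1::'a)) = Poly_Mapping.single (var i) 1"
proof -
  have "contract r (0 + var i) = 0" unfolding contract_add_var[OF r] by simp
  then show ?thesis using nontriv by (simp add: EQ_eq_sum_contract subs_var contract_0[OF r])
qed

text \<open>Compare constant terms in the intertwining identity for \<open>a = x\<^sub>i, b = x\<^sub>j\<close>.\<close>
lemma intertw_var_var:
  fixes \<iota> :: "complex \<Rightarrow> 'a::comm_ring_1"
  assumes C: "C_alg \<iota>" and s1: "bichar s1" and s2: "bichar s2" and r: "bichar r"
    and I: "intertw \<iota> r s1 s2"
  shows "s1 (var i) (var j) + (r (var i) (var j) + r (var j) (var i)) = s2 (var i) (var j)"
proof (cases "(1::'a) = 0")
  case True
  then show ?thesis by (metis mult_1 mult_zero_left)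
next
  case nontriv: False
  let ?x = "\<lambda>k. Poly_Mapping.single k (1::'a)"
  let ?p = "Poly_Mapping.single 0 (s1 (var i) (var j)) + ?x (var i + var j)"
  have emb: "emb \<iota> (Poly_Mapping.single k 1) = ?x k" for k
    using C unfolding emb_def C_alg_def by (subst map_single) simp_all
  have "EQ r ?p = bprod s2 (?x (var i)) (?x (var j))"
    using I[unfolded intertw_def, rule_format, of "Poly_Mapping.single (var i) 1" "Poly_Mapping.single (var j) 1"]
    by (simp only: emb bprod_single_var_var[OF s1 nontriv] EQ_single_var[OF r nontriv])
  then have "s2 (var i) (var j) = lookup (EQ r ?p) 0"
    by (simp add: bprod_single_var_var[OF s2 nontriv] lookup_single var_add_var_neq_zero)
  also have "\<dots> = (\<Sum>\<alpha>\<in>{0, var i + var j}. lookup ?p \<alpha> * contract r \<alpha>)"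
    by (rule lookup_EQ_zero)
      (use keys_add[of "Poly_Mapping.single 0 (s1 (var i) (var j))" "?x (var i + var j)"]
        in \<open>auto split: if_splits\<close>)
  also have "\<dots> = s1 (var i) (var j) + contract r (var j + var i)"
    by (simp add: contract_0[OF r] lookup_single var_add_var_neq_zero add.commute)
  also have "contract r (var j + var i) = r (var i) (var j) + r (var j) (var i)"
    unfolding contract_add_var[OF r] by (simp add: contract_0[OF r])
  finally show ?thesis ..
qed

lemma conv_transp_eq_if_intertw:
  fixes \<iota> :: "complex \<Rightarrow> 'a::comm_ring_1"
  assumes "C_alg \<iota>" and s1: "bichar s1" and s2: "bichar s2" and r: "bichar r"
    and "intertw \<iota> r s1 s2"
  shows "conv r (transp r) = conv s2 (binv s1)"
proof -
  have "bichar_rec (\<lambda>i j. s2 (var i) (var j) + - s1 (var i) (var j)) (conv s2 (binv s1))"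
    by (rule bichar_rec_conv[OF bichar_rec_bichar[OF s2] bichar_rec_binv[OF bichar_rec_bichar[OF s1]]])
  moreover have "(\<lambda>i j. s2 (var i) (var j) + - s1 (var i) (var j)) = (\<lambda>i j. r (var i) (var j) + r (var j) (var i))"
    using intertw_var_var[OF assms] by (simp add: fun_eq_iff algebra_simps)
  ultimately have "bichar_rec (\<lambda>i j. r (var i) (var j) + r (var j) (var i)) (conv s2 (binv s1))"
    by simp
  then show ?thesis by (rule bichar_rec_unique[OF bichar_rec_conv_transp[OF r]])
qed

theorem corollary3p6:
  fixes \<iota> :: "complex \<Rightarrow> 'a::comm_ring_1"
    and s1 s2 r :: "mono \<Rightarrow> mono \<Rightarrow> 'a"
  assumes "C_alg \<iota>"
    and "bichar s1" and "symm s1" and "bichar s2" and "symm s2"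
    and "bichar r"
    and "intertw \<iota> r s1 s2"
  shows "conv r (transp r) = conv s2 (binv s1)
    \<and> (\<forall>r'. bichar r' \<and> conv r' (transp r') = conv r (transp r) \<longrightarrow> EQ r' = EQ r)
    \<and> (\<forall>r'. bichar r' \<and> intertw \<iota> r' s1 s2 \<longrightarrow> EQ r' = EQ r)"
proof -
  have sym: "conv r (transp r) = conv s2 (binv s1)"
    by (rule conv_transp_eq_if_intertw[OF assms(1,2,4,6,7)])
  moreover have "EQ r' = EQ r" if "bichar r'" "conv r' (transp r') = conv r (transp r)" for r'
    using EQ_eq_if_conv_transp_eq[OF assms(6) that] .
  moreover have "EQ r' = EQ r" if "bichar r'" "intertw \<iota> r' s1 s2" for r'
    using EQ_eq_if_conv_transp_eq[OF assms(6) that(1)] conv_transp_eq_if_intertw[OF assms(1,2,4) that] sym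
    by simp
  ultimately show ?thesis by blast
qed

end
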